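(* The assignment $A\mapsto F^2$, $B\mapsto F^{12}\,[F(F'')^{-1}]^2=\mathrm{diag}(1,-e^{i\pi/3},e^{2i\pi/3})$, $H_1\mapsto \tilde B E$, $H_3\mapsto E$ extends to a group isomorphism $Fr(162)=\mathcal N\rtimes\langle H_1,H_3\rangle\to D(9,1,1;2,1,1)=\langle F^2,[F(F'')^{-1}]^2\rangle\rtimes\langle \tilde B,E\rangle$. In particular $Fr(162)\cong D(9,1,1;2,1,1)$.
   Context: Let $\omega=e^{2i\pi/3}$. Define $G_1=\mathrm{diag}(e^{7i\pi/9},-e^{4i\pi/9},-e^{7i\pi/9})$, $G_2=\begin{pmatrix}-\tfrac12 e^{4i\pi/9}&\tfrac{1}{\sqrt2}e^{7i\pi/9}&\tfrac12 e^{4i\pi/9}\\ \tfrac{1}{\sqrt2}e^{7i\pi/9}&0&\tfrac{1}{\sqrt2}e^{7i\pi/9}\\ \tfrac12 e^{4i\pi/9}&\tfrac{1}{\sqrt2}e^{7i\pi/9}&-\tfrac12 e^{4i\pi/9}\end{pmatrix}$ and $Fr(162)=\langle G_1,G_2\rangle\subset SU(3)$. Let $A=G_1G_2^2G_1^{-1}=\tfrac12 e^{5i\pi/9}\begin{pmatrix}-1+e^{i\pi/3}&0&1+e^{i\pi/3}\\0&-2&0\\1+e^{i\pi/3}&0&-1+e^{i\pi/3}\end{pmatrix}$, $B=G_1G_2^{-2}G_1=\tfrac12\begin{pmatrix}1+\omega&0&-1+\omega\\0&-2e^{i\pi/3}&0\\-1+\omega&0&1+\omega\end{pmatrix}$,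 $\mathcal N=\langle A,B\rangle$, $H_1=\begin{pmatrix}-\frac12&-\frac1{\sqrt2}&-\frac12\\-\frac1{\sqrt2}&0&\frac1{\sqrt2}\\-\frac12&\frac1{\sqrt2}&-\frac12\end{pmatrix}$, $H_3=\begin{pmatrix}\frac12&\frac1{\sqrt2}&-\frac12\\\frac1{\sqrt2}&0&\frac1{\sqrt2}\\\frac12&-\frac1{\sqrt2}&-\frac12\end{pmatrix}$ (both in $Fr(162)$). Let $F=\mathrm{diag}(e^{i\pi/9},e^{i\pi/9},e^{-2i\pi/9})$, $F''=\mathrm{diag}(e^{-2i\pi/9},e^{i\pi/9},e^{i\pi/9})$, $E=\begin{pmatrix}0&1&0\\0&0&1\\1&0&0\end{pmatrix}$, $\tilde B=\begin{pmatrix}-1&0&0\\0&0&-1\\0&-1&0\end{pmatrix}$, and $D(9,1,1;2,1,1)=\langle F^2,E,\tilde B\rangle\subset SU(3)$. *)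

theory Defs
  imports "HOL-Analysis.Analysis" "HOL-Algebra.Algebra"
begin

type_synonym cmat = "complex^3^3"

definition mat3 :: "complex \<Rightarrow> complex \<Rightarrow> complex \<Rightarrow> complex \<Rightarrow> complex \<Rightarrow> complex
    \<Rightarrow> complex \<Rightarrow> complex \<Rightarrow> complex \<Rightarrow> cmat" where
  "mat3 a b c d e f g h i = vector [vector [a,b,c], vector [d,e,f], vector [g,h,i]]"

definition diag3 :: "complex \<Rightarrow> complex \<Rightarrow> complex \<Rightarrow> cmat" where
  "diag3 a b c = mat3 a 0 0 0 b 0 0 0 c"

definition GL3 :: "cmat monoid" where
  "GL3 = \<lparr>carrier = {M. invertible M}, mult = (**), one = mat 1\<rparr>"

definition gen :: "cmat set \<Rightarrow> cmat set" where
  "gen S = generate GL3 S"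

definition grp :: "cmat set \<Rightarrow> cmat monoid" where
  "grp H = GL3\<lparr>carrier := H\<rparr>"

definition "s2 = complex_of_real (1 / sqrt 2)"

definition "G1 = diag3 (cis (7*pi/9)) (- cis (4*pi/9)) (- cis (7*pi/9))"
definition "G2 = mat3
   (- cis (4*pi/9) / 2)  (s2 * cis (7*pi/9))  (cis (4*pi/9) / 2)
   (s2 * cis (7*pi/9))   0                    (s2 * cis (7*pi/9))
   (cis (4*pi/9) / 2)    (s2 * cis (7*pi/9))  (- cis (4*pi/9) / 2)"

definition "Fr162 = gen {G1, G2}"

definition "Amat = G1 ** (G2 ** G2) ** matrix_inv G1"
definition "Bmat = G1 ** matrix_inv (G2 ** G2) ** G1"
definition "Nsub = gen {Amat, Bmat}"

definition "H1 = mat3 (-1/2) (-s2) (-1/2)  (-s2) 0 s2  (-1/2) s2 (-1/2)"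
definition "H3 = mat3 (1/2) s2 (-1/2)  s2 0 s2  (1/2) (-s2) (-1/2)"
definition "Ksub = gen {H1, H3}"

definition "Fm = diag3 (cis (pi/9)) (cis (pi/9)) (cis (-2*pi/9))"
definition "Fpp = diag3 (cis (-2*pi/9)) (cis (pi/9)) (cis (pi/9))"
definition "Em = mat3 0 1 0  0 0 1  1 0 0"
definition "Bt = mat3 (-1) 0 0  0 0 (-1)  0 (-1) 0"

definition "D9 = gen {Fm ** Fm, Em, Bt}"
definition "Xm = (Fm ** matrix_inv Fpp) ** (Fm ** matrix_inv Fpp)"
definition "Nsub' = gen {Fm ** Fm, Xm}"
definition "Ksub' = gen {Bt, Em}"

end

theory Submission
  imports Defs
begin

text \<open>
  Let \<open>\<zeta> = exp(i\<pi>/9)\<close>. Conjugation by the real orthogonal involution \<open>U\<close> turns \<open>G1\<close> and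
  \<open>G2\<close> into monomial matrices with entries in \<open>\<langle>\<zeta>\<rangle>\<close>, like the generators of
  \<open>D(9,1,1;2,1,1)\<close>. On such matrices, raising every entry to the 13th power (the Galois
  automorphism \<open>\<zeta> \<mapsto> \<zeta>^13\<close>, applied entrywise) is multiplicative, and it is injective
  because 13 is a unit modulo 18. Composed with conjugation by \<open>U\<close> and by the exchange
  matrix \<open>J\<close>, it maps \<open>Fr(162)\<close> onto \<open>D(9,1,1;2,1,1)\<close> and sends \<open>A\<close>, \<open>B\<close>, \<open>H1\<close>, \<open>H3\<close> to
  the prescribed matrices; both facts are checked on explicit words in the generators.

  The semidirect decomposition is proved for \<open>D(9,1,1;2,1,1)\<close> and pulled back along the
  isomorphism. There \<open>\<langle>F^2, [F(F'')^-1]^2\<rangle>\<close> is the group of diagonal matrices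
  \<open>diag(\<zeta>^e1, \<zeta>^e2, \<zeta>^e3)\<close> with \<open>e1\<close> even, all \<open>ei\<close> congruent modulo 6 and
  \<open>e1 + e2 + e3 \<equiv> 0 (mod 18)\<close>, a description that is visibly invariant under conjugation
  by monomial matrices; and \<open>\<langle>Bt, E\<rangle>\<close> consists of signed permutation matrices, of which
  only \<open>I\<close> and \<open>-I\<close> are diagonal, while \<open>-I\<close> has determinant \<open>-1\<close>.
\<close>

section \<open>Roots of unity of order 18\<close>

definition root18 :: "int \<Rightarrow> complex" where
  "root18 k = cis (of_int k * pi / 9)"

lemma root18_add: "root18 (a + b) = root18 a * root18 b"
  unfolding root18_def by (simp add: cis_mult add_divide_distrib distrib_right)

lemma root18_nonzero [simp]: "root18 k \<noteq> 0"
  unfolding root18_def by simp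

lemma root18_0 [simp]: "root18 0 = 1"
  unfolding root18_def by simp

lemma root18_9: "root18 9 = -1"
  unfolding root18_def by simp

lemma root18_add_9: "root18 (a + 9) = - root18 a"
  by (simp add: root18_add root18_9)

lemma root18_cong:
  assumes "a mod 18 = b mod 18"
  shows "root18 a = root18 b"
proof -
  obtain k where k: "a = b + 18 * k"
    using assms by (metis mod_eq_dvd_iff dvdE add.commute diff_add_cancel)
  have "root18 (18 * k) = cis (2 * pi * of_int k)"
    unfolding root18_def by (simp add: field_simps)
  then have "root18 (18 * k) = 1" by simp
  then show ?thesis unfolding k by (simp add: root18_add)
qed

lemma root18_pow: "root18 a ^ n = root18 (int n * a)"
proof -
  have "root18 a ^ n = cis (real n * (of_int a * pi / 9))"
    unfolding root18_def by (rule Complex.DeMoivre)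
  then show ?thesis unfolding root18_def by (simp add: field_simps)
qed

lemma root18_sum: "root18 (sum e A) = (\<Prod>i\<in>A. root18 (e i))"
  by (induction A rule: infinite_finite_induct) (simp_all add: root18_add)

lemma cis_eq_root18:
  "cis (pi/9) = root18 1" "cis (-2*pi/9) = root18 (-2)" "cis (pi/3) = root18 3"
  "cis (2*pi/3) = root18 6" "cis (4*pi/9) = root18 4" "cis (7*pi/9) = root18 7"
  unfolding root18_def by (simp_all add: field_simps)

section \<open>Monomial matrices\<close>

definition monomial_mat :: "('n::finite \<Rightarrow> 'n) \<Rightarrow> ('n \<Rightarrow> int) \<Rightarrow> complex^'n^'n" where
  "monomial_mat p e = (\<chi> i j. if j = p i then root18 (e i) else 0)"

lemma monomial_mat_mult:
  "monomial_mat p e ** monomial_mat q f = monomial_mat (q \<circ> p) (\<lambda>i. e i + f (p i))"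
proof -
  have "(\<Sum>j\<in>UNIV. (if j = p i then root18 (e i) else 0) * (if k = q j then root18 (f j) else 0))
      = (if k = q (p i) then root18 (e i + f (p i)) else 0)" for i k
  proof -
    have "(\<Sum>j\<in>UNIV. (if j = p i then root18 (e i) else 0) * (if k = q j then root18 (f j) else 0))
        = (\<Sum>j\<in>UNIV. if j = p i then root18 (e i) * (if k = q j then root18 (f j) else 0) else 0)"
      by (rule sum.cong) auto
    also have "\<dots> = root18 (e i) * (if k = q (p i) then root18 (f (p i)) else 0)"
      by simp
    finally show ?thesis by (simp add: root18_add)
  qed
  then show ?thesis
    unfolding monomial_mat_def matrix_matrix_mult_def by (simp add: vec_eq_iff)
qed

lemma monomial_mat_eqI:
  assumes "p = q" and "\<And>i. e i mod 18 = f i mod 18"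
  shows "monomial_mat p e = monomial_mat q f"
proof -
  have "root18 (e i) = root18 (f i)" for i
    using assms(2) by (rule root18_cong)
  then show ?thesis unfolding monomial_mat_def assms(1) by (simp add: vec_eq_iff)
qed

lemma monomial_mat_perm_unique:
  assumes "monomial_mat p e = monomial_mat q f"
  shows "p = q"
proof
  fix i
  have "monomial_mat p e $ i $ p i \<noteq> 0"
    unfolding monomial_mat_def by simp
  then have "monomial_mat q f $ i $ p i \<noteq> 0"
    using assms by simp
  then show "p i = q i"
    unfolding monomial_mat_def by (auto split: if_splits)
qed

lemma monomial_mat_id_0: "monomial_mat id (\<lambda>_. 0) = mat 1"
  unfolding monomial_mat_def mat_def by (simp add: vec_eq_iff)

lemma monomial_mat_inverse:
  assumes "bij p"
  shows "monomial_mat p e ** monomial_mat (inv_into UNIV p) (\<lambda>i. - e (inv_into UNIV p i))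
      = mat 1"
    and "monomial_mat (inv_into UNIV p) (\<lambda>i. - e (inv_into UNIV p i)) ** monomial_mat p e
      = mat 1"
proof -
  have "inv_into UNIV p (p i) = i" "p (inv_into UNIV p i) = i" for i
    using assms by (simp_all add: bij_is_inj bij_is_surj surj_f_inv_f)
  then show "monomial_mat p e ** monomial_mat (inv_into UNIV p) (\<lambda>i. - e (inv_into UNIV p i))
      = mat 1"
    and "monomial_mat (inv_into UNIV p) (\<lambda>i. - e (inv_into UNIV p i)) ** monomial_mat p e
      = mat 1"
    unfolding monomial_mat_mult monomial_mat_id_0[symmetric] by (auto intro!: monomial_mat_eqI)
qed

lemma invertible_monomial_mat: "bij p \<Longrightarrow> invertible (monomial_mat p e)"
  unfolding invertible_def using monomial_mat_inverse by blast

lemma det_monomial_mat_id: "det (monomial_mat id e) = root18 (sum e UNIV)"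
  by (subst det_diagonal) (simp_all add: monomial_mat_def root18_sum)

definition hadamard_pow :: "nat \<Rightarrow> 'a::monoid_mult^'n^'m \<Rightarrow> 'a^'n^'m" where
  "hadamard_pow n M = (\<chi> i j. M$i$j ^ n)"

lemma hadamard_pow_monomial_mat:
  "n > 0 \<Longrightarrow> hadamard_pow n (monomial_mat p e) = monomial_mat p (\<lambda>i. int n * e i)"
  unfolding hadamard_pow_def monomial_mat_def by (simp add: vec_eq_iff root18_pow)

lemma hadamard_pow_hadamard_pow: "hadamard_pow m (hadamard_pow n M) = hadamard_pow (n * m) M"
  unfolding hadamard_pow_def by (simp add: power_mult)

lemma hadamard_pow_monomial_mat_cong:
  assumes "n mod 18 = 1"
  shows "hadamard_pow n (monomial_mat p e) = monomial_mat p e"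
proof -
  have "n > 0"
    by (rule gr0I) (use assms in simp)
  then have "hadamard_pow n (monomial_mat p e) = monomial_mat p (\<lambda>i. int n * e i)"
    by (rule hadamard_pow_monomial_mat)
  also have "\<dots> = monomial_mat p e"
  proof (rule monomial_mat_eqI)
    show "(int n * e i) mod 18 = e i mod 18" for i
      using assms by (metis mod_mult_left_eq mult_1 zmod_int of_nat_1 of_nat_numeral)
  qed simp
  finally show ?thesis .
qed

lemma hadamard_pow_monomial_mat_mult:
  "n > 0 \<Longrightarrow> hadamard_pow n (monomial_mat p e ** monomial_mat q f)
     = hadamard_pow n (monomial_mat p e) ** hadamard_pow n (monomial_mat q f)"
  by (simp add: hadamard_pow_monomial_mat monomial_mat_mult distrib_left)

text \<open>Concrete matrices are written with \<open>tuple3\<close>, so that their products are evaluated by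
  simplification to arithmetic on numerals.\<close>

definition tuple3 :: "'a \<Rightarrow> 'a \<Rightarrow> 'a \<Rightarrow> 3 \<Rightarrow> 'a" where
  "tuple3 a b c = (\<lambda>i. if i = 1 then a else if i = 2 then b else c)"

lemma tuple3_simps [simp]: "tuple3 a b c 1 = a" "tuple3 a b c 2 = b" "tuple3 a b c 3 = c"
  unfolding tuple3_def by simp_all

lemma tuple3_123: "tuple3 1 2 3 = id"
  unfolding tuple3_def using exhaust_3 by (auto simp: fun_eq_iff)

lemma tuple3_map: "(\<lambda>i. f (tuple3 a b c i)) = tuple3 (f a) (f b) (f c)"
  unfolding tuple3_def by auto

lemma tuple3_const: "tuple3 a a a = (\<lambda>_. a)"
  unfolding tuple3_def by auto

lemma bij_tuple3:
  fixes a b c :: 3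
  assumes "a \<noteq> b" "b \<noteq> c" "a \<noteq> c"
  shows "bij (tuple3 a b c)"
proof -
  have "inj (tuple3 a b c)"
  proof (rule injI)
    fix i j assume "tuple3 a b c i = tuple3 a b c j"
    then show "i = j" using assms exhaust_3[of i] exhaust_3[of j] by auto
  qed
  then show ?thesis by (simp add: bij_def finite_UNIV_inj_surj)
qed

lemma monomial_mat_tuple3_mult:
  "monomial_mat (tuple3 a b c) (tuple3 x y z) ** monomial_mat (tuple3 a' b' c') (tuple3 x' y' z') =
   monomial_mat (tuple3 (tuple3 a' b' c' a) (tuple3 a' b' c' b) (tuple3 a' b' c' c))
     (tuple3 (x + tuple3 x' y' z' a) (y + tuple3 x' y' z' b) (z + tuple3 x' y' z' c))"
proof (unfold monomial_mat_mult comp_def tuple3_map, rule monomial_mat_eqI)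
  fix i :: 3
  show "(tuple3 x y z i + tuple3 x' y' z' (tuple3 a b c i)) mod 18 =
    tuple3 (x + tuple3 x' y' z' a) (y + tuple3 x' y' z' b) (z + tuple3 x' y' z' c) i mod 18"
    using exhaust_3[of i] by auto
qed simp

lemma monomial_mat_tuple3_eqI:
  assumes "a = a'" "b = b'" "c = c'"
    and "x mod 18 = x' mod 18" "y mod 18 = y' mod 18" "z mod 18 = z' mod 18"
  shows "monomial_mat (tuple3 a b c) (tuple3 x y z) =
    monomial_mat (tuple3 a' b' c') (tuple3 x' y' z')"
proof (rule monomial_mat_eqI)
  fix i :: 3
  show "tuple3 x y z i mod 18 = tuple3 x' y' z' i mod 18"
    using exhaust_3[of i] assms(4-6) by (elim disjE) (simp_all only: tuple3_simps)
qed (use assms(1-3) in simp)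

lemma mat_1_eq_monomial_mat: "mat 1 = monomial_mat (tuple3 1 2 3) (tuple3 0 0 0)"
  unfolding tuple3_123 tuple3_const monomial_mat_id_0 ..

lemma mat3_nth [simp]:
  "mat3 a b c d e f g h i $ 1 $ 1 = a" "mat3 a b c d e f g h i $ 1 $ 2 = b"
  "mat3 a b c d e f g h i $ 1 $ 3 = c" "mat3 a b c d e f g h i $ 2 $ 1 = d"
  "mat3 a b c d e f g h i $ 2 $ 2 = e" "mat3 a b c d e f g h i $ 2 $ 3 = f"
  "mat3 a b c d e f g h i $ 3 $ 1 = g" "mat3 a b c d e f g h i $ 3 $ 2 = h"
  "mat3 a b c d e f g h i $ 3 $ 3 = i"
  unfolding mat3_def by simp_all

lemma mat3_eq_iff: "M = mat3 a b c d e f g h i \<longleftrightarrow>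
   M$1$1 = a \<and> M$1$2 = b \<and> M$1$3 = c \<and> M$2$1 = d \<and> M$2$2 = e \<and> M$2$3 = f \<and>
   M$3$1 = g \<and> M$3$2 = h \<and> M$3$3 = i"
  by (auto simp: vec_eq_iff forall_3)

lemma mat3_mult: "mat3 x1 x2 x3 x4 x5 x6 x7 x8 x9 ** mat3 y1 y2 y3 y4 y5 y6 y7 y8 y9 =
  mat3 (x1*y1+x2*y4+x3*y7) (x1*y2+x2*y5+x3*y8) (x1*y3+x2*y6+x3*y9)
       (x4*y1+x5*y4+x6*y7) (x4*y2+x5*y5+x6*y8) (x4*y3+x5*y6+x6*y9)
       (x7*y1+x8*y4+x9*y7) (x7*y2+x8*y5+x9*y8) (x7*y3+x8*y6+x9*y9)"
  unfolding mat3_eq_iff by (simp add: matrix_matrix_mult_def sum_3)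

lemma monomial_mat_tuple3_eq_mat3: "monomial_mat (tuple3 a b c) (tuple3 x y z) =
  mat3
    (if a = 1 then root18 x else 0) (if a = 2 then root18 x else 0) (if a = 3 then root18 x else 0)
    (if b = 1 then root18 y else 0) (if b = 2 then root18 y else 0) (if b = 3 then root18 y else 0)
    (if c = 1 then root18 z else 0) (if c = 2 then root18 z else 0) (if c = 3 then root18 z else 0)"
  unfolding mat3_eq_iff by (auto simp: monomial_mat_def)

section \<open>The group GL(3, C) and its generated subgroups\<close>

lemma matrix_inv_eqI:
  fixes A B :: "'a::field^'n^'n"
  assumes "B ** A = mat 1"
  shows "matrix_inv A = B"
proof -
  have "A ** B = mat 1" using assms matrix_left_right_inverse by blast
  then have "A ** matrix_inv A = mat 1 \<and> matrix_inv A ** A = mat 1"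
    unfolding matrix_inv_def using assms
    by (intro someI_ex[of "\<lambda>A'. A ** A' = mat 1 \<and> A' ** A = mat 1"]) blast
  then have "matrix_inv A = matrix_inv A ** (A ** B)"
    using \<open>A ** B = mat 1\<close> by (simp add: matrix_mul_rid)
  also have "\<dots> = B"
    using \<open>A ** matrix_inv A = mat 1 \<and> matrix_inv A ** A = mat 1\<close>
    by (simp add: matrix_mul_assoc matrix_mul_lid)
  finally show ?thesis .
qed

lemma involution_conj_mult:
  fixes U A B :: "'a::semiring_1^'n^'n"
  assumes "U ** U = mat 1"
  shows "U ** (A ** B) ** U = (U ** A ** U) ** (U ** B ** U)"
  by (metis assms matrix_mul_assoc matrix_mul_rid)

lemma involution_conj_conj:
  fixes U A :: "'a::semiring_1^'n^'n"
  assumes "U ** U = mat 1"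
  shows "U ** (U ** A ** U) ** U = A"
  by (metis assms matrix_mul_assoc matrix_mul_rid matrix_mul_lid)

lemma group_GL3: "group GL3"
proof (rule groupI)
  show "x \<otimes>\<^bsub>GL3\<^esub> y \<in> carrier GL3" if "x \<in> carrier GL3" "y \<in> carrier GL3" for x y
    using that unfolding GL3_def by (simp add: invertible_mult)
  show "\<exists>y\<in>carrier GL3. y \<otimes>\<^bsub>GL3\<^esub> x = \<one>\<^bsub>GL3\<^esub>" if "x \<in> carrier GL3" for x
    using that unfolding GL3_def invertible_def by auto
qed (auto simp: GL3_def invertible_def matrix_mul_assoc matrix_mul_lid)

interpretation GL: group GL3
  by (rule group_GL3)

lemma GL3_simps [simp]: "carrier GL3 = {M. invertible M}" "mult GL3 = (**)" "one GL3 = mat 1"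
  unfolding GL3_def by simp_all

lemma matrix_inv_eq_inv_GL3: "invertible M \<Longrightarrow> matrix_inv M = inv\<^bsub>GL3\<^esub> M"
  using GL.l_inv[of M] by (intro matrix_inv_eqI) simp

lemma grp_simps [simp]: "carrier (grp H) = H" "mult (grp H) = (**)" "one (grp H) = mat 1"
  unfolding grp_def by simp_all

lemma group_grp: "subgroup H GL3 \<Longrightarrow> group (grp H)"
  unfolding grp_def by (rule GL.subgroup_imp_group)

lemma subgroup_grp: "subgroup H GL3 \<Longrightarrow> subgroup G GL3 \<Longrightarrow> H \<subseteq> G \<Longrightarrow> subgroup H (grp G)"
  unfolding grp_def by (rule GL.subgroup_incl)

lemma subgroup_mult_closed: "subgroup H GL3 \<Longrightarrow> x \<in> H \<Longrightarrow> y \<in> H \<Longrightarrow> x ** y \<in> H"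
  using subgroup.m_closed[of H GL3 x y] by simp

lemma matrix_inv_closed: "subgroup H GL3 \<Longrightarrow> M \<in> H \<Longrightarrow> matrix_inv M \<in> H"
  using subgroup.subset[of H GL3] subgroup.m_inv_closed[of H GL3 M]
  by (auto simp: matrix_inv_eq_inv_GL3)

lemma subgroup_gen: "S \<subseteq> carrier GL3 \<Longrightarrow> subgroup (gen S) GL3"
  unfolding gen_def by (rule GL.generate_is_subgroup)

lemma gen_incl: "x \<in> S \<Longrightarrow> x \<in> gen S"
  unfolding gen_def by (rule generate.incl)

lemma gen_mult: "x \<in> gen S \<Longrightarrow> y \<in> gen S \<Longrightarrow> x ** y \<in> gen S"
  unfolding gen_def using generate.eng[of x GL3 S y] by simp

lemma gen_mult_generator: "x \<in> gen S \<Longrightarrow> y \<in> S \<Longrightarrow> x ** y \<in> gen S"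
  by (simp add: gen_incl gen_mult)

lemma gen_minimal: "subgroup H GL3 \<Longrightarrow> S \<subseteq> H \<Longrightarrow> gen S \<subseteq> H"
  unfolding gen_def by (rule GL.generate_subgroup_incl)

lemma gen_eqI:
  "S \<subseteq> carrier GL3 \<Longrightarrow> T \<subseteq> carrier GL3 \<Longrightarrow> S \<subseteq> gen T \<Longrightarrow> T \<subseteq> gen S \<Longrightarrow> gen S = gen T"
  by (meson gen_minimal subgroup_gen subset_antisym)

lemma generate_grp: "subgroup H GL3 \<Longrightarrow> S \<subseteq> H \<Longrightarrow> generate (grp H) S = gen S"
  unfolding grp_def gen_def by (rule GL.generate_consistent)

lemma gen_image:
  assumes "group_hom (grp H) GL3 f" "subgroup H GL3" "S \<subseteq> H"
  shows "f ` gen S = gen (f ` S)"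
  using group_hom.generate_img[OF assms(1), of S] assms(2,3)
  by (simp add: generate_grp gen_def)

definition monomial_mats :: "cmat set" where
  "monomial_mats = {monomial_mat p e | p e. bij p}"

lemma inv_GL3_monomial_mat:
  "bij p \<Longrightarrow>
    inv\<^bsub>GL3\<^esub> (monomial_mat p e) = monomial_mat (inv_into UNIV p) (\<lambda>i. - e (inv_into UNIV p i))"
  by (metis matrix_inv_eqI matrix_inv_eq_inv_GL3 monomial_mat_inverse(2) invertible_monomial_mat)

lemma subgroup_monomial_mats: "subgroup monomial_mats GL3"
proof (rule GL.subgroupI)
  show "monomial_mats \<subseteq> carrier GL3"
    unfolding monomial_mats_def using invertible_monomial_mat by auto
  show "monomial_mats \<noteq> {}"
    unfolding monomial_mats_def by auto
  show "inv\<^bsub>GL3\<^esub> M \<in> monomial_mats" if M: "M \<in> monomial_mats" for M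
  proof -
    obtain p e where "M = monomial_mat p e" "bij p"
      using M unfolding monomial_mats_def by blast
    then show ?thesis
      unfolding monomial_mats_def using bij_imp_bij_inv by (auto simp: inv_GL3_monomial_mat)
  qed
  show "M \<otimes>\<^bsub>GL3\<^esub> M' \<in> monomial_mats" if "M \<in> monomial_mats" "M' \<in> monomial_mats" for M M'
    using that bij_comp unfolding monomial_mats_def by (fastforce simp: monomial_mat_mult)
qed

lemma monomial_mats_subset_GL3: "monomial_mats \<subseteq> carrier GL3"
  by (rule subgroup.subset[OF subgroup_monomial_mats])

lemma monomial_mat_tuple3_in_monomial_mats:
  "a \<noteq> b \<Longrightarrow> b \<noteq> c \<Longrightarrow> a \<noteq> c \<Longrightarrow> monomial_mat (tuple3 a b c) e \<in> monomial_mats"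
  unfolding monomial_mats_def using bij_tuple3 by blast

lemma monomial_mat_id_pow: "monomial_mat id e [^]\<^bsub>GL3\<^esub> (n::nat) = monomial_mat id (\<lambda>i. int n * e i)"
proof (induction n)
  case 0
  show ?case by (simp add: monomial_mat_id_0[symmetric] id_def)
next
  case (Suc n)
  then show ?case by (simp add: monomial_mat_mult algebra_simps comp_def)
qed

lemma monomial_mat_id_int_pow: "monomial_mat id e [^]\<^bsub>GL3\<^esub> (k::int) = monomial_mat id (\<lambda>i. k * e i)"
proof (cases "k < 0")
  case True
  have "monomial_mat id e [^]\<^bsub>GL3\<^esub> k = inv\<^bsub>GL3\<^esub> (monomial_mat id (\<lambda>i. int (nat (- k)) * e i))"
    using True by (simp add: int_pow_def2 monomial_mat_id_pow)
  also have "\<dots> = monomial_mat id (\<lambda>i. k * e i)"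
    using True by (simp add: inv_GL3_monomial_mat inv_into_id)
  finally show ?thesis .
qed (simp add: int_pow_def2 monomial_mat_id_pow)

section \<open>Semidirect decompositions\<close>

definition semidirect_decomposition :: "('a, 'b) monoid_scheme \<Rightarrow> 'a set \<Rightarrow> 'a set \<Rightarrow> bool" where
  "semidirect_decomposition G N K \<longleftrightarrow>
     N \<lhd> G \<and> subgroup K G \<and> N \<inter> K = {\<one>\<^bsub>G\<^esub>} \<and> N <#>\<^bsub>G\<^esub> K = carrier G"

lemma semidirect_decomposition_image:
  assumes "group G" "group H" "\<phi> \<in> iso G H" "semidirect_decomposition G N K"
  shows "semidirect_decomposition H (\<phi> ` N) (\<phi> ` K)"
proof -
  interpret \<phi>: group_hom G H \<phi>
    using assms(1-3) by (simp add: group_hom_def group_hom_axioms_def iso_def)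
  have inj: "inj_on \<phi> (carrier G)" and onto: "\<phi> ` carrier G = carrier H"
    using assms(3) by (auto simp: iso_def bij_betw_def)
  have N: "N \<lhd> G" and K: "subgroup K G"
    and NK: "N \<inter> K = {\<one>\<^bsub>G\<^esub>}" "N <#>\<^bsub>G\<^esub> K = carrier G"
    using assms(4) by (auto simp: semidirect_decomposition_def)
  have sub: "N \<subseteq> carrier G" "K \<subseteq> carrier G"
    using normal_imp_subgroup[OF N] K by (auto dest: subgroup.subset)
  have "\<phi> ` N \<inter> \<phi> ` K = {\<one>\<^bsub>H\<^esub>}"
    using inj_on_image_Int[OF inj sub] NK(1) by simp
  moreover have "\<phi> ` N <#>\<^bsub>H\<^esub> \<phi> ` K = carrier H"
    using set_mult_hom[OF \<phi>.homh sub] NK(2) onto by simp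
  ultimately show ?thesis
    using iso_normal_subgroup[OF assms(3,1,2) N] \<phi>.subgroup_img_is_subgroup[OF K]
    by (simp add: semidirect_decomposition_def)
qed

lemma semidirect_decomposition_preimage:
  assumes "group G" "group H" "\<phi> \<in> iso G H" "N \<subseteq> carrier G" "K \<subseteq> carrier G"
    and "semidirect_decomposition H (\<phi> ` N) (\<phi> ` K)"
  shows "semidirect_decomposition G N K"
proof -
  have "inj_on \<phi> (carrier G)"
    using assms(3) by (simp add: iso_def bij_betw_def)
  then show ?thesis
    using semidirect_decomposition_image[OF assms(2,1) group.iso_set_sym[OF assms(1,3)] assms(6)]
      assms(4,5) by simp
qed

lemma semidirect_decompositionI:
  fixes G (structure)
  assumes "group G" "N \<lhd> G" "subgroup K G" "N \<inter> K \<subseteq> {\<one>\<^bsub>G\<^esub>}"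
    and "carrier G = generate G S" "S \<subseteq> N \<union> K"
  shows "semidirect_decomposition G N K"
proof -
  interpret group G by fact
  have NK: "subgroup (N <#> K) G"
    using assms(2,3) second_isomorphism_grp.normal_set_mult_subgroup
    unfolding second_isomorphism_grp_def second_isomorphism_grp_axioms_def by blast
  have N: "subgroup N G" using normal_imp_subgroup[OF assms(2)] .
  have "S \<subseteq> N <#> K"
  proof
    fix s assume "s \<in> S"
    then consider "s \<in> N" | "s \<in> K" using assms(6) by blast
    then show "s \<in> N <#> K"
    proof cases
      case 1
      then have "s = s \<otimes> \<one>" using N subgroup.mem_carrier by force
      then show ?thesis using 1 subgroup.one_closed[OF assms(3)] unfolding set_mult_def by blast
    next
      case 2
      then have "s = \<one> \<otimes> s" using assms(3) subgroup.mem_carrier by force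
      then show ?thesis using 2 subgroup.one_closed[OF N] unfolding set_mult_def by blast
    qed
  qed
  then have "carrier G \<subseteq> N <#> K"
    using generate_subgroup_incl[OF _ NK] assms(5) by simp
  moreover have "N <#> K \<subseteq> carrier G"
    using N assms(3) by (simp add: setmult_subset_G subgroup.subset)
  moreover have "\<one> \<in> N \<inter> K"
    using N assms(3) subgroup.one_closed by blast
  ultimately show ?thesis
    using assms(2-4) by (auto simp: semidirect_decomposition_def)
qed

section \<open>Monomial forms of the generators\<close>

definition Umat :: cmat where
  "Umat = mat3 s2 0 s2 0 1 0 s2 0 (- s2)"

definition conjU :: "cmat \<Rightarrow> cmat" where
  "conjU M = Umat ** M ** Umat"

lemma s2_sq: "s2 * s2 = 1/2"
proof -
  have "(1 / sqrt 2) * (1 / sqrt 2) = (1/2::real)" by (simp add: divide_simps)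
  then show ?thesis unfolding s2_def of_real_mult[symmetric] by simp
qed

lemma s2_s2_mult: "s2 * (s2 * x) = x / 2" "s2 * x * s2 = x / 2"
proof -
  show "s2 * (s2 * x) = x / 2"
    by (simp add: mult.assoc[symmetric] s2_sq)
  then show "s2 * x * s2 = x / 2"
    by (metis mult.commute)
qed

lemma Umat_involution: "Umat ** Umat = mat 1"
  unfolding Umat_def mat3_mult mat_1_eq_monomial_mat monomial_mat_tuple3_eq_mat3
  by (simp add: s2_sq)

lemma conjU_mult: "conjU (A ** B) = conjU A ** conjU B"
  unfolding conjU_def using Umat_involution by (rule involution_conj_mult)

lemma conjU_conjU: "conjU (conjU M) = M"
  unfolding conjU_def using Umat_involution by (rule involution_conj_conj)

lemma conjU_mat_1: "conjU (mat 1) = mat 1"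
  unfolding conjU_def by (simp add: matrix_mul_rid Umat_involution)

lemma invertible_conjU: "invertible M \<Longrightarrow> invertible (conjU M)"
  unfolding conjU_def using Umat_involution invertible_def invertible_mult by metis

lemma group_hom_conjU: "group_hom GL3 GL3 conjU"
  by (auto simp: group_hom_def group_hom_axioms_def hom_def group_GL3 conjU_mult invertible_conjU)

lemma conjU_gen: "S \<subseteq> carrier GL3 \<Longrightarrow> conjU ` gen S = gen (conjU ` S)"
  unfolding gen_def by (rule group_hom.generate_img[OF group_hom_conjU, symmetric])

definition "G1' = monomial_mat (tuple3 3 2 1) (tuple3 7 13 7)"

definition "G2' = monomial_mat (tuple3 2 1 3) (tuple3 7 7 13)"

lemma G1_eq_conjU: "G1 = conjU G1'"
proof -
  have "G1 = mat3 (root18 7) 0 0 0 (root18 13) 0 0 0 (root18 16)"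
    unfolding G1_def diag3_def cis_eq_root18 using root18_add_9[of 4] root18_add_9[of 7] by simp
  also have "\<dots> = conjU G1'"
    unfolding conjU_def G1'_def Umat_def monomial_mat_tuple3_eq_mat3 mat3_mult
    using root18_add_9[of 7] by (simp add: s2_s2_mult)
  finally show ?thesis .
qed

lemma G2_eq_conjU: "G2 = conjU G2'"
proof -
  have "G2 = mat3 (- root18 4 / 2) (s2 * root18 7) (root18 4 / 2) (s2 * root18 7) 0 (s2 * root18 7)
      (root18 4 / 2) (s2 * root18 7) (- root18 4 / 2)"
    unfolding G2_def cis_eq_root18 by simp
  also have "\<dots> = conjU G2'"
    unfolding conjU_def G2'_def Umat_def monomial_mat_tuple3_eq_mat3 mat3_mult
    using root18_add_9[of 4] by (simp add: s2_s2_mult mult.commute)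
  finally show ?thesis .
qed

lemma Bt_eq_monomial_mat: "Bt = monomial_mat (tuple3 1 3 2) (tuple3 9 9 9)"
  unfolding Bt_def monomial_mat_tuple3_eq_mat3 by (simp add: root18_9)

lemma Em_eq_monomial_mat: "Em = monomial_mat (tuple3 2 3 1) (tuple3 0 0 0)"
  unfolding Em_def monomial_mat_tuple3_eq_mat3 by simp

lemma Em_sq_eq_monomial_mat: "Em ** Em = monomial_mat (tuple3 3 1 2) (tuple3 0 0 0)"
  unfolding Em_eq_monomial_mat monomial_mat_tuple3_mult by (rule monomial_mat_tuple3_eqI) simp_all

lemma H1_eq_conjU: "H1 = conjU Bt"
  unfolding H1_def conjU_def Bt_eq_monomial_mat Umat_def monomial_mat_tuple3_eq_mat3 mat3_mult
  by (simp add: s2_s2_mult s2_sq root18_9)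

lemma H3_eq_conjU: "H3 = conjU (Em ** Em)"
  unfolding H3_def conjU_def Em_sq_eq_monomial_mat Umat_def monomial_mat_tuple3_eq_mat3 mat3_mult
  by (simp add: s2_s2_mult s2_sq)

lemma Fm_eq_monomial_mat: "Fm = monomial_mat (tuple3 1 2 3) (tuple3 1 1 (-2))"
  unfolding Fm_def diag3_def monomial_mat_tuple3_eq_mat3 cis_eq_root18 by simp

lemma Fm_sq_eq_monomial_mat: "Fm ** Fm = monomial_mat (tuple3 1 2 3) (tuple3 2 2 (-4))"
  unfolding Fm_eq_monomial_mat monomial_mat_tuple3_mult by (rule monomial_mat_tuple3_eqI) simp_all

lemma Xm_eq_monomial_mat: "Xm = monomial_mat (tuple3 1 2 3) (tuple3 6 0 (-6))"
proof -
  have Fpp_monomial_mat: "Fpp = monomial_mat (tuple3 1 2 3) (tuple3 (-2) 1 1)"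
    unfolding Fpp_def diag3_def monomial_mat_tuple3_eq_mat3 cis_eq_root18 by simp
  have Fpp_inv: "matrix_inv Fpp = monomial_mat (tuple3 1 2 3) (tuple3 2 (-1) (-1))"
    unfolding Fpp_monomial_mat
    by (intro matrix_inv_eqI, unfold mat_1_eq_monomial_mat monomial_mat_tuple3_mult)
      (rule monomial_mat_tuple3_eqI; simp)
  show ?thesis
    unfolding Xm_def Fpp_inv Fm_eq_monomial_mat monomial_mat_tuple3_mult
    by (rule monomial_mat_tuple3_eqI) simp_all
qed

lemma Fm_pow_12_Xm_eq_monomial_mat:
  "Fm [^]\<^bsub>GL3\<^esub> (12::nat) ** Xm = monomial_mat (tuple3 1 2 3) (tuple3 0 12 6)"
proof -
  have Fm_pow_12: "Fm [^]\<^bsub>GL3\<^esub> (12::nat) = monomial_mat (tuple3 1 2 3) (tuple3 12 12 (-24))"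
    unfolding Fm_eq_monomial_mat tuple3_123 monomial_mat_id_pow tuple3_map by simp
  show ?thesis
    unfolding Fm_pow_12 Xm_eq_monomial_mat monomial_mat_tuple3_mult
    by (rule monomial_mat_tuple3_eqI) simp_all
qed

lemma Fm_pow_12_Xm_eq_diag3:
  "Fm [^]\<^bsub>GL3\<^esub> (12::nat) ** Xm = diag3 1 (- cis (pi/3)) (cis (2*pi/3))"
  unfolding Fm_pow_12_Xm_eq_monomial_mat diag3_def monomial_mat_tuple3_eq_mat3 cis_eq_root18
  using root18_add_9[of 3] by simp

lemma generators_in_monomial_mats:
  "Fm ** Fm \<in> monomial_mats" "Xm \<in> monomial_mats" "Bt \<in> monomial_mats" "Em \<in> monomial_mats"
  "G1' \<in> monomial_mats" "G2' \<in> monomial_mats"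
  unfolding Fm_sq_eq_monomial_mat Xm_eq_monomial_mat Bt_eq_monomial_mat Em_eq_monomial_mat
    G1'_def G2'_def
  by (simp_all add: monomial_mat_tuple3_in_monomial_mats)

section \<open>The twist\<close>

definition exchange_mat :: cmat where
  "exchange_mat = monomial_mat (tuple3 3 2 1) (tuple3 0 0 0)"

definition twist :: "cmat \<Rightarrow> cmat" where
  "twist M = exchange_mat ** hadamard_pow 13 M ** exchange_mat"

lemma exchange_mat_involution: "exchange_mat ** exchange_mat = mat 1"
  unfolding exchange_mat_def mat_1_eq_monomial_mat monomial_mat_tuple3_mult
  by (rule monomial_mat_tuple3_eqI) simp_all

lemma hadamard_pow_in_monomial_mats:
  "n > 0 \<Longrightarrow> M \<in> monomial_mats \<Longrightarrow> hadamard_pow n M \<in> monomial_mats"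
  unfolding monomial_mats_def by (auto simp: hadamard_pow_monomial_mat) blast

lemma twist_in_monomial_mats: "M \<in> monomial_mats \<Longrightarrow> twist M \<in> monomial_mats"
  unfolding twist_def exchange_mat_def
  by (intro subgroup.m_closed[OF subgroup_monomial_mats, simplified] hadamard_pow_in_monomial_mats
      monomial_mat_tuple3_in_monomial_mats) simp_all

lemma twist_mult:
  assumes "M \<in> monomial_mats" "M' \<in> monomial_mats"
  shows "twist (M ** M') = twist M ** twist M'"
proof -
  have "hadamard_pow 13 (M ** M') = hadamard_pow 13 M ** hadamard_pow 13 M'"
    using assms unfolding monomial_mats_def by (auto simp: hadamard_pow_monomial_mat_mult)
  then show ?thesis
    unfolding twist_def by (simp add: involution_conj_mult exchange_mat_involution)
qed

lemma inj_on_twist: "inj_on twist monomial_mats"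
proof (rule inj_onI)
  fix M M' assume M: "M \<in> monomial_mats" "M' \<in> monomial_mats" and "twist M = twist M'"
  then have "hadamard_pow 13 M = hadamard_pow 13 M'"
    unfolding twist_def by (metis exchange_mat_involution involution_conj_conj)
  then have "hadamard_pow 7 (hadamard_pow 13 M) = hadamard_pow 7 (hadamard_pow 13 M')"
    by simp
  then have "hadamard_pow 91 M = hadamard_pow 91 M'"
    \<comment> \<open>\<open>13 * 7 = 91 \<equiv> 1 (mod 18)\<close>\<close>
    by (simp add: hadamard_pow_hadamard_pow)
  then show "M = M'"
    using M by (auto simp: monomial_mats_def hadamard_pow_monomial_mat_cong)
qed

lemma group_hom_twist: "group_hom (grp monomial_mats) GL3 twist"
  using group_grp[OF subgroup_monomial_mats] twist_in_monomial_mats twist_mult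
    subgroup.subset[OF subgroup_monomial_mats]
  by (auto simp: group_hom_def group_hom_axioms_def hom_def group_GL3)

lemma twist_gen: "S \<subseteq> monomial_mats \<Longrightarrow> twist ` gen S = gen (twist ` S)"
  by (rule gen_image[OF group_hom_twist subgroup_monomial_mats])

lemma twist_monomial_mat_tuple3:
  "twist (monomial_mat (tuple3 a b c) (tuple3 x y z)) =
    exchange_mat ** monomial_mat (tuple3 a b c) (tuple3 (13 * x) (13 * y) (13 * z)) ** exchange_mat"
  unfolding twist_def hadamard_pow_monomial_mat[OF zero_less_numeral] tuple3_map by simp

section \<open>The semidirect decomposition of D(9,1,1;2,1,1)\<close>

lemma subgroup_D9: "subgroup D9 GL3"
  unfolding D9_def using generators_in_monomial_mats monomial_mats_subset_GL3
  by (intro subgroup_gen) auto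

lemma D9_subset_monomial_mats: "D9 \<subseteq> monomial_mats"
  unfolding D9_def using generators_in_monomial_mats
  by (intro gen_minimal[OF subgroup_monomial_mats]) auto

lemma Xm_in_D9: "Xm \<in> D9"
proof -
  have word: "Xm = (Fm ** Fm) ** (Fm ** Fm) ** Bt ** (Fm ** Fm) ** Bt"
    unfolding Fm_sq_eq_monomial_mat Xm_eq_monomial_mat Bt_eq_monomial_mat monomial_mat_tuple3_mult
    by (rule monomial_mat_tuple3_eqI) simp_all
  have "Fm ** Fm \<in> D9" "Bt \<in> D9"
    unfolding D9_def by (simp_all add: gen_incl)
  then show ?thesis
    unfolding word by (metis subgroup_mult_closed[OF subgroup_D9])
qed

lemma D9_eq_gen: "D9 = gen {Fm ** Fm, Xm, Bt, Em}"
  unfolding D9_def using Xm_in_D9 generators_in_monomial_mats monomial_mats_subset_GL3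
  by (intro gen_eqI) (auto simp: D9_def intro: gen_incl)

definition Ndiag :: "cmat set" where
  "Ndiag = {monomial_mat id e | e.
     (\<forall>i j. (6::int) dvd e i - e j) \<and> (18::int) dvd sum e UNIV \<and> even (e 1)}"

definition signed_perms :: "cmat set" where
  "signed_perms = {monomial_mat p (\<lambda>_. 9 * k) | p k. bij p}"

lemma subgroup_Ndiag: "subgroup Ndiag GL3"
proof (rule GL.subgroupI)
  show "Ndiag \<subseteq> carrier GL3"
    unfolding Ndiag_def using invertible_monomial_mat[of id] by auto
  have "monomial_mat id (\<lambda>_. 0) \<in> Ndiag"
    unfolding Ndiag_def by auto
  then show "Ndiag \<noteq> {}" by blast
  show "inv\<^bsub>GL3\<^esub> M \<in> Ndiag" if M: "M \<in> Ndiag" for M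
  proof -
    obtain e where "M = monomial_mat id e" and e: "\<forall>i j. (6::int) dvd e i - e j"
      "(18::int) dvd sum e UNIV" "even (e 1)"
      using M unfolding Ndiag_def by blast
    moreover have "\<forall>i j. (6::int) dvd (- e i) - (- e j)"
      using e(1) by (metis dvd_minus_iff minus_diff_eq diff_minus_eq_add add.commute
          diff_conv_add_uminus)
    ultimately show ?thesis
      unfolding Ndiag_def by (auto simp: inv_GL3_monomial_mat sum_negf)
  qed
  show "M \<otimes>\<^bsub>GL3\<^esub> M' \<in> Ndiag" if M: "M \<in> Ndiag" "M' \<in> Ndiag" for M M'
  proof -
    obtain e f where "M = monomial_mat id e" "M' = monomial_mat id f"
      and e: "\<forall>i j. (6::int) dvd e i - e j" "(18::int) dvd sum e UNIV" "even (e 1)"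
      and f: "\<forall>i j. (6::int) dvd f i - f j" "(18::int) dvd sum f UNIV" "even (f 1)"
      using M unfolding Ndiag_def by blast
    moreover have "\<forall>i j. (6::int) dvd (e i + f i) - (e j + f j)"
      using e(1) f(1) by (metis add_diff_add dvd_add)
    ultimately show ?thesis
      unfolding Ndiag_def by (auto simp: monomial_mat_mult sum.distrib)
  qed
qed

lemma monomial_mats_conj_Ndiag:
  assumes "M \<in> monomial_mats" "N \<in> Ndiag"
  shows "M ** N ** inv\<^bsub>GL3\<^esub> M \<in> Ndiag"
proof -
  obtain p f where M: "M = monomial_mat p f" "bij p"
    using assms(1) unfolding monomial_mats_def by blast
  obtain e where N: "N = monomial_mat id e" and e: "\<forall>i j. (6::int) dvd e i - e j"
    "(18::int) dvd sum e UNIV" "even (e 1)"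
    using assms(2) unfolding Ndiag_def by blast
  have inv_p: "inv_into UNIV p (p i) = i" for i
    using M(2) by (simp add: bij_is_inj)
  have "M ** N ** inv\<^bsub>GL3\<^esub> M = monomial_mat id (\<lambda>i. e (p i))"
    unfolding M(1) N inv_GL3_monomial_mat[OF M(2)] monomial_mat_mult
    by (rule monomial_mat_eqI) (simp_all add: fun_eq_iff inv_p)
  moreover have "sum (\<lambda>i. e (p i)) UNIV = sum e UNIV"
    using sum.reindex[of p UNIV e] M(2) by (simp add: bij_def)
  moreover have "even (e (p 1))"
    using e(1)[rule_format, of "p 1" 1] e(3) by presburger
  ultimately show ?thesis
    using e unfolding Ndiag_def by auto
qed

lemma subgroup_signed_perms: "subgroup signed_perms GL3"
proof (rule GL.subgroupI)
  show "signed_perms \<subseteq> carrier GL3"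
    unfolding signed_perms_def using invertible_monomial_mat by auto
  have "mat 1 \<in> signed_perms"
    unfolding signed_perms_def monomial_mat_id_0[symmetric]
    by (rule CollectI, intro exI[of _ id] exI[of _ 0]) simp
  then show "signed_perms \<noteq> {}" by blast
  show "inv\<^bsub>GL3\<^esub> M \<in> signed_perms" if M: "M \<in> signed_perms" for M
  proof -
    obtain p k where "M = monomial_mat p (\<lambda>_. 9 * k)" and p: "bij p"
      using M unfolding signed_perms_def by blast
    then have "inv\<^bsub>GL3\<^esub> M = monomial_mat (inv_into UNIV p) (\<lambda>_. 9 * (- k))"
      by (simp add: inv_GL3_monomial_mat)
    then show ?thesis
      unfolding signed_perms_def using bij_imp_bij_inv[OF p] by blast
  qed
  show "M \<otimes>\<^bsub>GL3\<^esub> M' \<in> signed_perms" if M: "M \<in> signed_perms" "M' \<in> signed_perms"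
    for M M'
  proof -
    obtain p k q l where "M = monomial_mat p (\<lambda>_. 9 * k)" "M' = monomial_mat q (\<lambda>_. 9 * l)"
      and pq: "bij p" "bij q"
      using M unfolding signed_perms_def by blast
    then have "M \<otimes>\<^bsub>GL3\<^esub> M' = monomial_mat (q \<circ> p) (\<lambda>_. 9 * (k + l))"
      by (simp add: monomial_mat_mult algebra_simps)
    then show ?thesis
      unfolding signed_perms_def using bij_comp[OF pq] by blast
  qed
qed

lemma Ndiag_Int_signed_perms: "Ndiag \<inter> signed_perms \<subseteq> {mat 1}"
proof
  fix M assume "M \<in> Ndiag \<inter> signed_perms"
  then obtain e p k where M: "M = monomial_mat id e" "M = monomial_mat p (\<lambda>_. 9 * k)"
    and e: "(18::int) dvd sum e UNIV"
    unfolding Ndiag_def signed_perms_def by blast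
  have "monomial_mat p (\<lambda>_. 9 * k) = monomial_mat id e"
    using M by simp
  then have p: "p = id"
    by (rule monomial_mat_perm_unique)
  have "det M = root18 0"
    unfolding M(1) det_monomial_mat_id using e by (intro root18_cong) simp
  moreover have "det M = root18 (27 * k)"
    unfolding M(2) p det_monomial_mat_id by simp
  ultimately have det_1: "root18 (27 * k) = 1"
    by simp
  have "even k"
  proof (rule ccontr)
    assume "odd k"
    then obtain m where "k = 2 * m + 1"
      by (rule oddE)
    then have "27 * k = 9 + 18 * (3 * m + 1)"
      by simp
    then have "(27 * k) mod 18 = 9 mod 18"
      by (simp only: mod_mult_self2)
    then have "root18 (27 * k) = root18 9"
      by (rule root18_cong)
    then show False
      using det_1 root18_9 by simp
  qed
  then obtain m where "9 * k = 18 * m"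
    by (auto elim: evenE)
  then have "M = monomial_mat id (\<lambda>_. 0)"
    unfolding M(2) p by (intro monomial_mat_eqI) simp_all
  then show "M \<in> {mat 1}"
    by (simp add: monomial_mat_id_0)
qed

lemma subgroup_Nsub': "subgroup Nsub' GL3"
  unfolding Nsub'_def using generators_in_monomial_mats monomial_mats_subset_GL3
  by (intro subgroup_gen) auto

lemma subgroup_Ksub': "subgroup Ksub' GL3"
  unfolding Ksub'_def using generators_in_monomial_mats monomial_mats_subset_GL3
  by (intro subgroup_gen) auto

lemma Nsub'_subset_Ndiag: "Nsub' \<subseteq> Ndiag"
proof -
  have "Fm ** Fm \<in> Ndiag" "Xm \<in> Ndiag"
    unfolding Ndiag_def Fm_sq_eq_monomial_mat Xm_eq_monomial_mat tuple3_123
    by (auto simp: forall_3 sum_3)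
  then show ?thesis
    unfolding Nsub'_def by (intro gen_minimal[OF subgroup_Ndiag]) auto
qed

lemma Ndiag_subset_Nsub': "Ndiag \<subseteq> Nsub'"
proof
  fix M assume "M \<in> Ndiag"
  then obtain e where M: "M = monomial_mat id e"
    and e: "\<forall>i j. (6::int) dvd e i - e j" "(18::int) dvd sum e UNIV" "even (e 1)"
    unfolding Ndiag_def by blast
  obtain b where b: "e 1 - e 2 = 6 * b"
    using e(1) by blast
  have "e 2 = e 1 - 2 * (3 * b)"
    using b by simp
  then have "even (e 2)"
    using e(3) by simp
  then obtain a where a: "e 2 = 2 * a"
    by (rule evenE)
  obtain c where c: "e 1 + e 2 + e 3 = 18 * c"
    using e(2) by (auto simp: sum_3)
  have e_eq: "e 1 = a * 2 + b * 6" "e 2 = a * 2" "e 3 = (a * -4 + b * -6) + 18 * c"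
    using a b c by linarith+
  have "M = (Fm ** Fm) [^]\<^bsub>GL3\<^esub> a ** Xm [^]\<^bsub>GL3\<^esub> b"
    unfolding M Fm_sq_eq_monomial_mat Xm_eq_monomial_mat tuple3_123 monomial_mat_id_int_pow
      monomial_mat_mult
  proof (rule monomial_mat_eqI)
    fix i :: 3
    show "e i mod 18 = (a * tuple3 2 2 (-4) i + b * tuple3 6 0 (-6) (id i)) mod 18"
      using exhaust_3[of i]
      by (elim disjE) (simp_all only: e_eq tuple3_simps id_apply mod_mult_self2, simp_all)
  qed simp
  moreover have "Fm ** Fm \<in> Nsub'" "Xm \<in> Nsub'"
    unfolding Nsub'_def by (simp_all add: gen_incl)
  then have "(Fm ** Fm) [^]\<^bsub>GL3\<^esub> a \<in> Nsub'" "Xm [^]\<^bsub>GL3\<^esub> b \<in> Nsub'"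
    using GL.subgroup_int_pow_closed[OF subgroup_Nsub'] by blast+
  ultimately show "M \<in> Nsub'"
    by (simp add: Nsub'_def gen_mult)
qed

lemma Ksub'_subset_signed_perms: "Ksub' \<subseteq> signed_perms"
proof -
  have "bij (tuple3 (1::3) 3 2)" "bij (tuple3 (2::3) 3 1)"
    by (simp_all add: bij_tuple3)
  then have "monomial_mat (tuple3 1 3 2) (\<lambda>_. 9 * 1) \<in> signed_perms"
    "monomial_mat (tuple3 2 3 1) (\<lambda>_. 9 * 0) \<in> signed_perms"
    unfolding signed_perms_def by blast+
  then have "Bt \<in> signed_perms" "Em \<in> signed_perms"
    by (simp_all add: Bt_eq_monomial_mat Em_eq_monomial_mat tuple3_const)
  then show ?thesis
    unfolding Ksub'_def by (intro gen_minimal[OF subgroup_signed_perms]) auto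
qed

lemma semidirect_decomposition_D9: "semidirect_decomposition (grp D9) Nsub' Ksub'"
proof (rule semidirect_decompositionI)
  have gens: "Fm ** Fm \<in> D9" "Xm \<in> D9" "Bt \<in> D9" "Em \<in> D9"
    using Xm_in_D9 by (auto simp: D9_def intro: gen_incl)
  have subsets: "Nsub' \<subseteq> D9" "Ksub' \<subseteq> D9"
    unfolding Nsub'_def Ksub'_def using gens by (auto intro!: gen_minimal[OF subgroup_D9])
  show group: "group (grp D9)"
    by (rule group_grp[OF subgroup_D9])
  show "subgroup Ksub' (grp D9)"
    by (rule subgroup_grp[OF subgroup_Ksub' subgroup_D9 subsets(2)])
  have "M ** N ** inv\<^bsub>grp D9\<^esub> M \<in> Nsub'" if "M \<in> D9" "N \<in> Nsub'" for M N
    using that monomial_mats_conj_Ndiag[of M N] D9_subset_monomial_mats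
      Ndiag_subset_Nsub' Nsub'_subset_Ndiag
      GL.m_inv_consistent[OF subgroup_D9 that(1)]
    by (auto simp: grp_def)
  then show "Nsub' \<lhd> grp D9"
    using subgroup_grp[OF subgroup_Nsub' subgroup_D9 subsets(1)]
    by (simp add: group.normal_inv_iff[OF group])
  show "Nsub' \<inter> Ksub' \<subseteq> {\<one>\<^bsub>grp D9\<^esub>}"
    using Nsub'_subset_Ndiag Ksub'_subset_signed_perms Ndiag_Int_signed_perms by auto
  show "carrier (grp D9) = generate (grp D9) {Fm ** Fm, Em, Bt}"
    using generate_grp[OF subgroup_D9] gens by (simp add: D9_def)
  show "{Fm ** Fm, Em, Bt} \<subseteq> Nsub' \<union> Ksub'"
    by (auto simp: Nsub'_def Ksub'_def intro: gen_incl)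
qed

section \<open>The isomorphism\<close>

definition Fr162_to_D9 :: "cmat \<Rightarrow> cmat" where
  "Fr162_to_D9 M = twist (conjU M)"

lemma Fr162_eq_conjU_gen: "Fr162 = conjU ` gen {G1', G2'}"
  unfolding Fr162_def G1_eq_conjU G2_eq_conjU
  using conjU_gen[of "{G1', G2'}"] generators_in_monomial_mats monomial_mats_subset_GL3 by auto

lemma gen_G1'_G2'_subset_monomial_mats: "gen {G1', G2'} \<subseteq> monomial_mats"
  using generators_in_monomial_mats by (intro gen_minimal[OF subgroup_monomial_mats]) auto

lemma conjU_Fr162_in_monomial_mats: "M \<in> Fr162 \<Longrightarrow> conjU M \<in> monomial_mats"
  using gen_G1'_G2'_subset_monomial_mats unfolding Fr162_eq_conjU_gen by (auto simp: conjU_conjU)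

lemma subgroup_Fr162: "subgroup Fr162 GL3"
  unfolding Fr162_def G1_eq_conjU G2_eq_conjU
  using generators_in_monomial_mats monomial_mats_subset_GL3
  by (intro subgroup_gen) (auto intro: invertible_conjU)

lemma D9_eq_gen_twist: "D9 = gen {twist G1', twist G2'}"
proof -
  have P1: "twist G1' = monomial_mat (tuple3 3 2 1) (tuple3 1 7 1)"
    unfolding G1'_def twist_monomial_mat_tuple3 exchange_mat_def monomial_mat_tuple3_mult
    by (rule monomial_mat_tuple3_eqI) simp_all
  have P2: "twist G2' = monomial_mat (tuple3 1 3 2) (tuple3 7 1 1)"
    unfolding G2'_def twist_monomial_mat_tuple3 exchange_mat_def monomial_mat_tuple3_mult
    by (rule monomial_mat_tuple3_eqI) simp_all
  let ?P1 = "twist G1'" and ?P2 = "twist G2'" and ?F = "Fm ** Fm"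
  have D9_words: "?F = ?P1 ** ?P1 ** ?P2 ** ?P1 ** ?P1 ** ?P1 ** ?P1 ** ?P2"
    "Em = ?P1 ** ?P1 ** ?P1 ** ?P1 ** ?P1 ** ?P1 ** ?P1 ** ?P2 ** ?P1 ** ?P1 ** ?P1 ** ?P1"
    "Bt = ?P1 ** ?P1 ** ?P1 ** ?P1 ** ?P1 ** ?P1 ** ?P2 ** ?P2 ** ?P2"
    unfolding P1 P2 Fm_sq_eq_monomial_mat Em_eq_monomial_mat Bt_eq_monomial_mat
      monomial_mat_tuple3_mult
    by (rule monomial_mat_tuple3_eqI; simp)+
  have twist_words: "?P1 = ?F ** ?F ** ?F ** Em ** ?F ** ?F ** Bt"
    "?P2 = ?F ** ?F ** ?F ** Em ** Bt ** ?F ** ?F ** Em"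
    unfolding P1 P2 Fm_sq_eq_monomial_mat Em_eq_monomial_mat Bt_eq_monomial_mat
      monomial_mat_tuple3_mult
    by (rule monomial_mat_tuple3_eqI; simp)+
  show ?thesis
    unfolding D9_def
  proof (rule gen_eqI)
    show "{?F, Em, Bt} \<subseteq> gen {?P1, ?P2}"
      unfolding D9_words by (simp add: gen_mult_generator gen_incl)
    show "{?P1, ?P2} \<subseteq> gen {?F, Em, Bt}"
      unfolding twist_words by (simp add: gen_mult_generator gen_incl)
  qed (use generators_in_monomial_mats twist_in_monomial_mats monomial_mats_subset_GL3 in auto)
qed

lemma Fr162_to_D9_image: "Fr162_to_D9 ` Fr162 = D9"
proof -
  have "Fr162_to_D9 ` Fr162 = twist ` gen {G1', G2'}"
    unfolding Fr162_eq_conjU_gen Fr162_to_D9_def image_image conjU_conjU by simp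
  also have "\<dots> = D9"
    unfolding D9_eq_gen_twist using generators_in_monomial_mats by (simp add: twist_gen)
  finally show ?thesis .
qed

lemma inj_on_Fr162_to_D9: "inj_on Fr162_to_D9 Fr162"
proof (rule inj_onI)
  fix M M' assume "M \<in> Fr162" "M' \<in> Fr162" "Fr162_to_D9 M = Fr162_to_D9 M'"
  then have "conjU M = conjU M'"
    using inj_on_twist conjU_Fr162_in_monomial_mats unfolding Fr162_to_D9_def
    by (auto dest: inj_onD)
  then show "M = M'"
    by (metis conjU_conjU)
qed

lemma Fr162_to_D9_mult:
  "M \<in> Fr162 \<Longrightarrow> M' \<in> Fr162 \<Longrightarrow> Fr162_to_D9 (M ** M') = Fr162_to_D9 M ** Fr162_to_D9 M'"
  unfolding Fr162_to_D9_def conjU_mult by (intro twist_mult conjU_Fr162_in_monomial_mats)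

lemma Fr162_to_D9_iso: "Fr162_to_D9 \<in> iso (grp Fr162) (grp D9)"
  using Fr162_to_D9_image inj_on_Fr162_to_D9 Fr162_to_D9_mult
  by (auto simp: iso_def hom_def bij_betw_def)

lemma Fr162_to_D9_gen:
  assumes "S \<subseteq> Fr162"
  shows "Fr162_to_D9 ` gen S = gen (Fr162_to_D9 ` S)"
proof -
  have "S \<subseteq> carrier GL3"
    using assms subgroup.subset[OF subgroup_Fr162] by blast
  then have "Fr162_to_D9 ` gen S = twist ` gen (conjU ` S)"
    unfolding Fr162_to_D9_def by (simp add: image_image[symmetric] conjU_gen)
  also have "\<dots> = gen (Fr162_to_D9 ` S)"
    using assms conjU_Fr162_in_monomial_mats
    by (subst twist_gen) (auto simp: Fr162_to_D9_def image_image)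
  finally show ?thesis .
qed

lemma matrix_inv_G1: "matrix_inv G1 = conjU (monomial_mat (tuple3 3 2 1) (tuple3 11 5 11))"
proof (rule matrix_inv_eqI)
  have "monomial_mat (tuple3 3 2 1) (tuple3 11 5 11) ** G1' = mat 1"
    unfolding G1'_def mat_1_eq_monomial_mat monomial_mat_tuple3_mult
    by (rule monomial_mat_tuple3_eqI) simp_all
  then show "conjU (monomial_mat (tuple3 3 2 1) (tuple3 11 5 11)) ** G1 = mat 1"
    unfolding G1_eq_conjU conjU_mult[symmetric] by (simp add: conjU_mat_1)
qed

lemma matrix_inv_G2_sq:
  "matrix_inv (G2 ** G2) = conjU (monomial_mat (tuple3 1 2 3) (tuple3 4 4 10))"
proof (rule matrix_inv_eqI)
  have "monomial_mat (tuple3 1 2 3) (tuple3 4 4 10) ** (G2' ** G2') = mat 1"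
    unfolding G2'_def mat_1_eq_monomial_mat monomial_mat_tuple3_mult
    by (rule monomial_mat_tuple3_eqI) simp_all
  then show "conjU (monomial_mat (tuple3 1 2 3) (tuple3 4 4 10)) ** (G2 ** G2) = mat 1"
    unfolding G2_eq_conjU conjU_mult[symmetric] by (simp add: conjU_mat_1)
qed

lemma Amat_eq_conjU: "Amat = conjU (monomial_mat (tuple3 1 2 3) (tuple3 8 14 14))"
proof -
  have "G1' ** (G2' ** G2') ** monomial_mat (tuple3 3 2 1) (tuple3 11 5 11)
      = monomial_mat (tuple3 1 2 3) (tuple3 8 14 14)"
    unfolding G1'_def G2'_def monomial_mat_tuple3_mult by (rule monomial_mat_tuple3_eqI) simp_all
  then show ?thesis
    unfolding Amat_def matrix_inv_G1 unfolding G1_eq_conjU G2_eq_conjU conjU_mult[symmetric]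
    by simp
qed

lemma Bmat_eq_conjU: "Bmat = conjU (monomial_mat (tuple3 1 2 3) (tuple3 6 12 0))"
proof -
  have "G1' ** monomial_mat (tuple3 1 2 3) (tuple3 4 4 10) ** G1' =
      monomial_mat (tuple3 1 2 3) (tuple3 6 12 0)"
    unfolding G1'_def monomial_mat_tuple3_mult by (rule monomial_mat_tuple3_eqI) simp_all
  then show ?thesis
    unfolding Bmat_def matrix_inv_G2_sq unfolding G1_eq_conjU conjU_mult[symmetric] by simp
qed

lemma Fr162_to_D9_Amat: "Fr162_to_D9 Amat = Fm ** Fm"
  unfolding Fr162_to_D9_def Amat_eq_conjU conjU_conjU twist_monomial_mat_tuple3
    Fm_sq_eq_monomial_mat
    exchange_mat_def monomial_mat_tuple3_mult
  by (rule monomial_mat_tuple3_eqI) simp_all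

lemma Fr162_to_D9_Bmat: "Fr162_to_D9 Bmat = Fm [^]\<^bsub>GL3\<^esub> (12::nat) ** Xm"
  unfolding Fr162_to_D9_def Bmat_eq_conjU conjU_conjU twist_monomial_mat_tuple3
    Fm_pow_12_Xm_eq_monomial_mat
    exchange_mat_def monomial_mat_tuple3_mult
  by (rule monomial_mat_tuple3_eqI) simp_all

lemma Fr162_to_D9_H1: "Fr162_to_D9 H1 = Bt ** Em"
  unfolding Fr162_to_D9_def H1_eq_conjU conjU_conjU Bt_eq_monomial_mat Em_eq_monomial_mat
    twist_monomial_mat_tuple3 exchange_mat_def monomial_mat_tuple3_mult
  by (rule monomial_mat_tuple3_eqI) simp_all

lemma Fr162_to_D9_H3: "Fr162_to_D9 H3 = Em"
  unfolding Fr162_to_D9_def H3_eq_conjU conjU_conjU Em_sq_eq_monomial_mat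
  unfolding Em_eq_monomial_mat twist_monomial_mat_tuple3 exchange_mat_def monomial_mat_tuple3_mult
  by (rule monomial_mat_tuple3_eqI) simp_all

lemma generators_in_Fr162: "Amat \<in> Fr162" "Bmat \<in> Fr162" "H1 \<in> Fr162" "H3 \<in> Fr162"
proof -
  have G: "G1 \<in> Fr162" "G2 \<in> Fr162"
    unfolding Fr162_def by (simp_all add: gen_incl)
  then show "Amat \<in> Fr162" "Bmat \<in> Fr162"
    unfolding Amat_def Bmat_def
    by (simp_all add: subgroup_mult_closed[OF subgroup_Fr162] matrix_inv_closed[OF subgroup_Fr162])
  have words: "Bt = G1' ** G2' ** G1'"
    "Em ** Em = G1' ** G1' ** G1' ** G1' ** G1' ** G1' ** G1' ** G2' ** G1' ** G1' ** G1' ** G1'"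
    unfolding G1'_def G2'_def Bt_eq_monomial_mat Em_sq_eq_monomial_mat monomial_mat_tuple3_mult
    by (rule monomial_mat_tuple3_eqI; simp)+
  have H: "H1 = G1 ** G2 ** G1"
    "H3 = G1 ** G1 ** G1 ** G1 ** G1 ** G1 ** G1 ** G2 ** G1 ** G1 ** G1 ** G1"
    unfolding H1_eq_conjU H3_eq_conjU words G1_eq_conjU G2_eq_conjU by (simp_all add: conjU_mult)
  show "H1 \<in> Fr162" "H3 \<in> Fr162"
    unfolding H using G by (simp_all add: subgroup_mult_closed[OF subgroup_Fr162])
qed

lemma Fr162_to_D9_Nsub: "Fr162_to_D9 ` Nsub = Nsub'"
proof -
  let ?F = "Fm ** Fm" and ?F12X = "Fm [^]\<^bsub>GL3\<^esub> (12::nat) ** Xm"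
  have words: "?F12X = ?F ** ?F ** ?F ** ?F ** ?F ** ?F ** Xm" "Xm = ?F ** ?F ** ?F ** ?F12X"
    unfolding Fm_pow_12_Xm_eq_monomial_mat
    unfolding Fm_sq_eq_monomial_mat Xm_eq_monomial_mat monomial_mat_tuple3_mult
    by (rule monomial_mat_tuple3_eqI; simp)+
  have "Fr162_to_D9 ` Nsub = gen {?F, ?F12X}"
    unfolding Nsub_def using generators_in_Fr162
    by (simp add: Fr162_to_D9_gen Fr162_to_D9_Amat Fr162_to_D9_Bmat)
  also have "\<dots> = Nsub'"
    unfolding Nsub'_def
  proof (rule gen_eqI)
    show "{?F, ?F12X} \<subseteq> gen {?F, Xm}"
      unfolding words(1) by (simp add: gen_mult_generator gen_incl)
    show "{?F, Xm} \<subseteq> gen {?F, ?F12X}"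
      by (subst (1) words(2)) (simp add: gen_mult_generator gen_incl)
    have "?F12X \<in> monomial_mats"
      unfolding Fm_pow_12_Xm_eq_monomial_mat by (simp add: monomial_mat_tuple3_in_monomial_mats)
    then show "{?F, ?F12X} \<subseteq> carrier GL3" "{?F, Xm} \<subseteq> carrier GL3"
      using generators_in_monomial_mats monomial_mats_subset_GL3 by auto
  qed
  finally show ?thesis .
qed

lemma Fr162_to_D9_Ksub: "Fr162_to_D9 ` Ksub = Ksub'"
proof -
  have word: "Bt = (Bt ** Em) ** Em ** Em"
    unfolding Bt_eq_monomial_mat Em_eq_monomial_mat monomial_mat_tuple3_mult
    by (rule monomial_mat_tuple3_eqI) simp_all
  have "Fr162_to_D9 ` Ksub = gen {Bt ** Em, Em}"
    unfolding Ksub_def using generators_in_Fr162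
    by (simp add: Fr162_to_D9_gen Fr162_to_D9_H1 Fr162_to_D9_H3)
  also have "\<dots> = Ksub'"
    unfolding Ksub'_def
  proof (rule gen_eqI)
    show "{Bt ** Em, Em} \<subseteq> gen {Bt, Em}"
      by (simp add: gen_mult_generator gen_incl)
    show "{Bt, Em} \<subseteq> gen {Bt ** Em, Em}"
      by (subst (1) word) (simp add: gen_mult_generator gen_incl)
    have "Bt ** Em \<in> monomial_mats"
      using generators_in_monomial_mats
      by (simp add: subgroup_mult_closed[OF subgroup_monomial_mats])
    then show "{Bt ** Em, Em} \<subseteq> carrier GL3" "{Bt, Em} \<subseteq> carrier GL3"
      using generators_in_monomial_mats monomial_mats_subset_GL3 by auto
  qed
  finally show ?thesis .
qed

theorem theorem6:
  shows "Fm [^]\<^bsub>GL3\<^esub> (12::nat) ** Xm = diag3 1 (- cis (pi/3)) (cis (2*pi/3))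
    \<and> Nsub \<lhd> grp Fr162 \<and> subgroup Ksub (grp Fr162)
    \<and> Nsub \<inter> Ksub = {mat 1} \<and> Nsub <#>\<^bsub>grp Fr162\<^esub> Ksub = Fr162
    \<and> D9 = gen {Fm ** Fm, Xm, Bt, Em}
    \<and> Nsub' \<lhd> grp D9 \<and> subgroup Ksub' (grp D9)
    \<and> Nsub' \<inter> Ksub' = {mat 1} \<and> Nsub' <#>\<^bsub>grp D9\<^esub> Ksub' = D9
    \<and> (\<exists>\<phi>. \<phi> \<in> iso (grp Fr162) (grp D9)
         \<and> \<phi> Amat = Fm ** Fm
         \<and> \<phi> Bmat = Fm [^]\<^bsub>GL3\<^esub> (12::nat) ** Xm
         \<and> \<phi> H1 = Bt ** Em
         \<and> \<phi> H3 = Em)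
    \<and> grp Fr162 \<cong> grp D9"
proof -
  have "Nsub \<subseteq> Fr162" "Ksub \<subseteq> Fr162"
    unfolding Nsub_def Ksub_def using generators_in_Fr162
    by (auto intro!: gen_minimal[OF subgroup_Fr162])
  then have "semidirect_decomposition (grp Fr162) Nsub Ksub"
    using semidirect_decomposition_D9 Fr162_to_D9_Nsub Fr162_to_D9_Ksub
      semidirect_decomposition_preimage[OF group_grp[OF subgroup_Fr162]
        group_grp[OF subgroup_D9] Fr162_to_D9_iso]
    by simp
  then show ?thesis
    using semidirect_decomposition_D9 Fr162_to_D9_iso is_isoI[OF Fr162_to_D9_iso]
      Fm_pow_12_Xm_eq_diag3 D9_eq_gen
      Fr162_to_D9_Amat Fr162_to_D9_Bmat Fr162_to_D9_H1 Fr162_to_D9_H3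
    unfolding semidirect_decomposition_def by auto
qed

end
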